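(* Let $m$ be an odd positive integer and $q\geq 1$. Then $m*Q_q$ divides $Q_{mq}$.
   Context: $Q_q$ denotes the $q$-dimensional hypercube graph (vertices are $q$-tuples of $0$'s and $1$'s, adjacent iff they differ in exactly one coordinate). For a graph $G$ and positive integer $m$, the $m$-stretch $m*G$ is the graph obtained from $G$ by replacing each edge by a path with $m$ edges, these paths being internally vertex-disjoint. For graphs $H$ and $G$, "$H$ divides $G$" means there is a collection of subgraphs $H_i$ of $G$, each isomorphic to $H$, such that $E(G)$ is the disjoint union of the edge sets $E(H_i)$. *)

theory Defs
  imports Main
begin

text \<open>A (finite, simple, undirected) graph is represented as a pair (V, E) of a vertex
  set V and a set E of edges, each edge being a two-element set of vertices.\<close>

type_synonym 'a graph = "'a set \<times> 'a set set"

definition verts :: "'a graph \<Rightarrow> 'a set" where "verts G = fst G"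
definition edges :: "'a graph \<Rightarrow> 'a set set" where "edges G = snd G"

definition hypercube :: "nat \<Rightarrow> bool list graph" where
  "hypercube q =
    ({u. length u = q},
     {{u, v} | u v. length u = q \<and> length v = q \<and> card {i. i < q \<and> u ! i \<noteq> v ! i} = 1})"

definition edge_ends :: "'a set \<Rightarrow> 'a \<times> 'a" where
  "edge_ends e = (SOME p. e = {fst p, snd p})"

text \<open>The i-th vertex (0 \<le> i \<le> m) of the path of length m replacing edge e in the m-stretch:
  original vertices are tagged Inl, internal path vertices are Inr (e, i) with 0 < i < m.\<close>

definition stretch_pt :: "nat \<Rightarrow> 'a set \<Rightarrow> nat \<Rightarrow> 'a + ('a set \<times> nat)" where
  "stretch_pt m e i =
    (if i = 0 then Inl (fst (edge_ends e))
     else if i = m then Inl (snd (edge_ends e))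
     else Inr (e, i))"

definition stretch :: "nat \<Rightarrow> 'a graph \<Rightarrow> ('a + ('a set \<times> nat)) graph" where
  "stretch m G =
    (Inl ` verts G \<union> {Inr (e, i) | e i. e \<in> edges G \<and> 0 < i \<and> i < m},
     {{stretch_pt m e i, stretch_pt m e (Suc i)} | e i. e \<in> edges G \<and> i < m})"

definition subgraph :: "'a graph \<Rightarrow> 'a graph \<Rightarrow> bool" where
  "subgraph H G \<longleftrightarrow> verts H \<subseteq> verts G \<and> edges H \<subseteq> edges G \<and>
     (\<forall>e \<in> edges H. e \<subseteq> verts H)"

definition isomorphic :: "'b graph \<Rightarrow> 'a graph \<Rightarrow> bool" where
  "isomorphic H G \<longleftrightarrow> (\<exists>f. bij_betw f (verts H) (verts G) \<and>
     (\<forall>x \<in> verts H. \<forall>y \<in> verts H. {x, y} \<in> edges H \<longleftrightarrow> {f x, f y} \<in> edges G))"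

definition graph_divides :: "'b graph \<Rightarrow> 'a graph \<Rightarrow> bool" where
  "graph_divides H G \<longleftrightarrow> (\<exists>\<H> :: 'a graph set.
     (\<forall>Hi \<in> \<H>. subgraph Hi G \<and> isomorphic H Hi) \<and>
     (\<forall>Hi \<in> \<H>. \<forall>Hj \<in> \<H>. Hi \<noteq> Hj \<longrightarrow> edges Hi \<inter> edges Hj = {}) \<and>
     \<Union> (edges ` \<H>) = edges G)"

end

theory Submission
  imports Defs
begin

text \<open>Split the coordinates of \<open>Q\<^sub>m\<^sub>q\<close> into \<open>q\<close> blocks of length \<open>m\<close>. Blowing up every
  coordinate of \<open>Q\<^sub>q\<close> to a whole block embeds \<open>m * Q\<^sub>q\<close> into \<open>Q\<^sub>m\<^sub>q\<close>: an edge in direction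
  \<open>j\<close> becomes the walk flipping the \<open>m\<close> bits of block \<open>j\<close> one at a time. The copies are the
  translates of this embedding by the vectors all of whose blocks have even parity. Since \<open>m\<close> is
  odd, on a vertex of such a translate the parity of a block that is not being flipped equals the
  corresponding coordinate of the edge of \<open>Q\<^sub>q\<close>. So an edge of \<open>Q\<^sub>m\<^sub>q\<close> determines the edge of
  \<open>Q\<^sub>q\<close> and the step along its walk, and of the two translates through it that remain, exactly one
  has block \<open>j\<close> of even parity. Hence every edge of \<open>Q\<^sub>m\<^sub>q\<close> lies in exactly one copy.\<close>

lemma odd_card_xor_const:
  fixes m :: nat
  assumes "odd m" "\<And>s. s < m \<Longrightarrow> g s = (f s \<noteq> b)"
  shows "odd (card {s. s < m \<and> g s}) = (odd (card {s. s < m \<and> f s}) \<noteq> b)"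
proof (cases b)
  case True
  have "{s. s < m \<and> g s} = {..<m} - {s. s < m \<and> f s}"
    using True assms(2) by auto
  then have "card {s. s < m \<and> g s} = m - card {s. s < m \<and> f s}"
    by (simp add: card_Diff_subset subset_eq)
  moreover have "card {s. s < m \<and> f s} \<le> m"
    using card_mono[of "{..<m}" "{s. s < m \<and> f s}"] by auto
  ultimately show ?thesis using True assms(1) by (auto simp: even_diff_nat)
next
  case False
  then have "{s. s < m \<and> g s} = {s. s < m \<and> f s}" using assms(2) by auto
  then show ?thesis using False by simp
qed

lemma odd_card_change_one:
  fixes m :: nat
  assumes "c < m" "g c \<noteq> f c" "\<And>s. s < m \<Longrightarrow> s \<noteq> c \<Longrightarrow> g s = f s"
  shows "odd (card {s. s < m \<and> g s}) \<longleftrightarrow> \<not> odd (card {s. s < m \<and> f s})"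
proof -
  let ?S = "{s. s < m \<and> s \<noteq> c \<and> f s}"
  have "{s. s < m \<and> f s} = (if f c then insert c ?S else ?S)"
    "{s. s < m \<and> g s} = (if g c then insert c ?S else ?S)"
    using assms by auto
  then show ?thesis using assms(2) by (cases "f c") auto
qed

definition block_odd :: "nat \<Rightarrow> bool list \<Rightarrow> nat \<Rightarrow> bool" where
  "block_odd m w t \<longleftrightarrow> odd (card {s. s < m \<and> w ! (t * m + s)})"

lemma block_odd_cong:
  "(\<And>s. s < m \<Longrightarrow> w ! (t * m + s) = x ! (t * m + s)) \<Longrightarrow> block_odd m w t = block_odd m x t"
  unfolding block_odd_def by (metis (mono_tags, lifting) Collect_cong)

definition even_blocks :: "nat \<Rightarrow> nat \<Rightarrow> bool list set" where
  "even_blocks m q = {A. length A = m * q \<and> (\<forall>t<q. \<not> block_odd m A t)}"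

lemma block_index_less: "t < q \<Longrightarrow> s < m \<Longrightarrow> t * m + s < m * (q::nat)"
proof -
  assume "t < q" "s < m"
  then have "t * m + s < Suc t * m" by simp
  also have "\<dots> \<le> q * m" using \<open>t < q\<close> by (intro mult_le_mono1) simp
  finally show ?thesis by (simp add: mult.commute)
qed

lemma block_indexE:
  assumes "n < m * (q::nat)"
  obtains t s where "t < q" "s < m" "n = t * m + s"
proof
  show "n div m < q" using assms by (simp add: less_mult_imp_div_less mult.commute)
  show "n mod m < m" using assms by (cases m) auto
qed simp

lemma block_index_eq_iff:
  "s < m \<Longrightarrow> s' < m \<Longrightarrow> t * m + s = t' * m + s' \<longleftrightarrow> t = t' \<and> (s::nat) = s'"
proof
  assume "s < m" "s' < m" "t * m + s = t' * m + s'"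
  then have "(t * m + s) div m = (t' * m + s') div m" "(t * m + s) mod m = (t' * m + s') mod m"
    by simp_all
  then show "t = t' \<and> s = s'" using \<open>s < m\<close> \<open>s' < m\<close> by simp
qed simp

lemma nth_equality_blocks:
  assumes "length x = m * q" "length y = m * q"
    "\<And>t s. t < q \<Longrightarrow> s < m \<Longrightarrow> x ! (t * m + s) = y ! (t * m + s)"
  shows "x = y"
proof (rule nth_equalityI)
  show "length x = length y" using assms by simp
  fix n assume "n < length x"
  then obtain t s where "t < q" "s < m" "n = t * m + s"
    using assms(1) block_indexE by metis
  then show "x ! n = y ! n" using assms(3) by simp
qed

definition differ_only_at :: "nat \<Rightarrow> bool list \<Rightarrow> bool list \<Rightarrow> nat \<Rightarrow> bool" where
  "differ_only_at q u v j \<longleftrightarrow> j < q \<and> u ! j \<noteq> v ! j \<and> (\<forall>t<q. t \<noteq> j \<longrightarrow> u ! t = v ! t)"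

lemma differ_only_at_sym: "differ_only_at q u v j \<Longrightarrow> differ_only_at q v u j"
  unfolding differ_only_at_def by auto

lemma differ_only_at_unique: "differ_only_at q u v j \<Longrightarrow> differ_only_at q u v j' \<Longrightarrow> j = j'"
  unfolding differ_only_at_def by auto

lemma differ_only_at_determines:
  assumes "differ_only_at q w z n" "differ_only_at q w z' n" "length z = q" "length z' = q"
  shows "z = z'"
  using assms unfolding differ_only_at_def by (auto intro: nth_equalityI)

lemma card_differ_eq_1_iff:
  "card {i. i < q \<and> u ! i \<noteq> v ! i} = 1 \<longleftrightarrow> (\<exists>j. differ_only_at q u v j)"
proof
  assume "card {i. i < q \<and> u ! i \<noteq> v ! i} = 1"
  then obtain j where "{i. i < q \<and> u ! i \<noteq> v ! i} = {j}" by (auto simp: card_1_singleton_iff)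
  then have "differ_only_at q u v j" unfolding differ_only_at_def by blast
  then show "\<exists>j. differ_only_at q u v j" ..
next
  assume "\<exists>j. differ_only_at q u v j"
  then obtain j where "differ_only_at q u v j" ..
  then have "{i. i < q \<and> u ! i \<noteq> v ! i} = {j}" unfolding differ_only_at_def by blast
  then show "card {i. i < q \<and> u ! i \<noteq> v ! i} = 1" by simp
qed

lemma doubleton_eq_of_differ_only_at:
  assumes "length u = q" "length v = q" "length u' = q" "length v' = q"
    "differ_only_at q u v j" "differ_only_at q u' v' j"
    "\<And>t. t < q \<Longrightarrow> t \<noteq> j \<Longrightarrow> u ! t = u' ! t"
  shows "{u, v} = {u', v'}"
proof (cases "u ! j = u' ! j")
  case True
  then have "u = u'" "v = v'"
    using assms by (auto simp: differ_only_at_def list_eq_iff_nth_eq)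
  then show ?thesis by simp
next
  case False
  then have "u = v'" "v = u'"
    using assms by (auto simp: differ_only_at_def list_eq_iff_nth_eq)
  then show ?thesis by auto
qed

lemma verts_hypercube: "verts (hypercube q) = {u. length u = q}"
  unfolding hypercube_def verts_def by simp

lemma edges_hypercube_iff:
  "e \<in> edges (hypercube q) \<longleftrightarrow>
    (\<exists>u v j. e = {u, v} \<and> length u = q \<and> length v = q \<and> differ_only_at q u v j)"
  unfolding hypercube_def edges_def card_differ_eq_1_iff by auto

lemma hypercube_edgeI:
  "length u = q \<Longrightarrow> length v = q \<Longrightarrow> differ_only_at q u v j \<Longrightarrow> {u, v} \<in> edges (hypercube q)"
  unfolding edges_hypercube_iff by blast

lemma edge_ends_doubleton: "edge_ends {u, v} = (u, v) \<or> edge_ends {u, v} = (v, u)"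
proof -
  have "\<exists>p. {u, v} = {fst p, snd p}" by (rule exI[of _ "(u, v)"]) simp
  then have "{u, v} = {fst (edge_ends {u, v}), snd (edge_ends {u, v})}"
    unfolding edge_ends_def by (rule someI_ex)
  then show ?thesis by (metis doubleton_eq_iff prod.collapse)
qed

lemma hypercube_edgeE:
  assumes "e \<in> edges (hypercube q)"
  obtains u v j where "edge_ends e = (u, v)" "e = {u, v}" "length u = q" "length v = q"
    "differ_only_at q u v j"
proof -
  obtain u v j where uv: "e = {u, v}" "length u = q" "length v = q" "differ_only_at q u v j"
    using assms by (auto simp: edges_hypercube_iff)
  from edge_ends_doubleton[of u v] show ?thesis
  proof
    assume "edge_ends {u, v} = (v, u)"
    then show ?thesis using that[of v u j] uv differ_only_at_sym by (metis insert_commute)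
  qed (use that uv in auto)
qed

definition image_graph :: "('a \<Rightarrow> 'b) \<Rightarrow> 'a graph \<Rightarrow> 'b graph" where
  "image_graph f G = (f ` verts G, (\<lambda>e. f ` e) ` edges G)"

lemma verts_image_graph: "verts (image_graph f G) = f ` verts G"
  by (simp add: image_graph_def verts_def)

lemma edges_image_graph: "edges (image_graph f G) = (\<lambda>e. f ` e) ` edges G"
  by (simp add: image_graph_def edges_def)

lemma isomorphic_image_graph:
  assumes inj: "inj_on f (verts G)" and edges_in: "\<And>e. e \<in> edges G \<Longrightarrow> e \<subseteq> verts G"
  shows "isomorphic G (image_graph f G)"
  unfolding isomorphic_def
proof (intro exI[of _ f] conjI ballI)
  show "bij_betw f (verts G) (verts (image_graph f G))"
    using inj by (simp add: bij_betw_def verts_image_graph)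
  fix x y assume "x \<in> verts G" "y \<in> verts G"
  show "{x, y} \<in> edges G \<longleftrightarrow> {f x, f y} \<in> edges (image_graph f G)"
  proof
    assume "{f x, f y} \<in> edges (image_graph f G)"
    then obtain e where "e \<in> edges G" "f ` {x, y} = f ` e"
      by (auto simp: edges_image_graph)
    moreover have "{x, y} \<subseteq> verts G" "e \<subseteq> verts G"
      using \<open>x \<in> verts G\<close> \<open>y \<in> verts G\<close> edges_in[OF \<open>e \<in> edges G\<close>] by auto
    ultimately have "{x, y} = e" using inj_on_image_eq_iff[OF inj] by metis
    then show "{x, y} \<in> edges G" using \<open>e \<in> edges G\<close> by simp
  next
    assume "{x, y} \<in> edges G"
    then have "f ` {x, y} \<in> edges (image_graph f G)"
      unfolding edges_image_graph by (rule imageI)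
    then show "{f x, f y} \<in> edges (image_graph f G)" by simp
  qed
qed

lemma subgraph_image_graph:
  assumes "\<And>e. e \<in> edges G \<Longrightarrow> e \<subseteq> verts G" "f ` verts G \<subseteq> verts H"
    "\<And>e. e \<in> edges G \<Longrightarrow> f ` e \<in> edges H"
  shows "subgraph (image_graph f G) H"
  using assms unfolding subgraph_def verts_image_graph edges_image_graph by auto

lemma verts_stretch:
  "verts (stretch m G) = Inl ` verts G \<union> {Inr (e, i) | e i. e \<in> edges G \<and> 0 < i \<and> i < m}"
  by (simp add: stretch_def verts_def)

lemma edges_stretch:
  "edges (stretch m G) = {{stretch_pt m e i, stretch_pt m e (Suc i)} | e i. e \<in> edges G \<and> i < m}"
  by (simp add: stretch_def edges_def)

lemma stretch_edges_subset_verts: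
  assumes "\<And>e. e \<in> edges G \<Longrightarrow> e \<subseteq> verts G \<and> (\<exists>u v. e = {u, v})"
    and "e' \<in> edges (stretch m G)"
  shows "e' \<subseteq> verts (stretch m G)"
proof -
  obtain e i where e: "e \<in> edges G" "i < m" "e' = {stretch_pt m e i, stretch_pt m e (Suc i)}"
    using assms(2) by (auto simp: edges_stretch)
  obtain u v where "e = {u, v}" "e \<subseteq> verts G" using assms(1)[OF e(1)] by blast
  then have "fst (edge_ends e) \<in> verts G \<and> snd (edge_ends e) \<in> verts G"
    using edge_ends_doubleton[of u v] by auto
  then have "stretch_pt m e k \<in> verts (stretch m G)" if "k \<le> m" for k
    using that e(1) by (auto simp: verts_stretch stretch_pt_def)
  then show ?thesis using e(2,3) by simp
qed

text \<open>Position \<open>n\<close> is bit \<open>n mod m\<close> of block \<open>n div m\<close>. As \<open>i\<close> runs from \<open>0\<close> to \<open>m\<close>, the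
  vertices \<open>cube_walk m q A u v i\<close> walk from the translate by \<open>A\<close> of the blow-up of \<open>u\<close> to that
  of \<open>v\<close>.\<close>

definition cube_walk :: "nat \<Rightarrow> nat \<Rightarrow> bool list \<Rightarrow> bool list \<Rightarrow> bool list \<Rightarrow> nat \<Rightarrow> bool list" where
  "cube_walk m q A u v i =
    map (\<lambda>n. A ! n \<noteq> (if n mod m < i then v ! (n div m) else u ! (n div m))) [0..<m * q]"

lemma length_cube_walk [simp]: "length (cube_walk m q A u v i) = m * q"
  by (simp add: cube_walk_def)

lemma nth_cube_walk:
  "t < q \<Longrightarrow> s < m \<Longrightarrow>
    cube_walk m q A u v i ! (t * m + s) = (A ! (t * m + s) \<noteq> (if s < i then v ! t else u ! t))"
  using block_index_less[of t q s m] by (simp add: cube_walk_def)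

lemma cube_walk_end: "0 < m \<Longrightarrow> cube_walk m q A u v m = cube_walk m q A v v 0"
  by (simp add: cube_walk_def)

lemma cube_walk_involution:
  "length w = m * q \<Longrightarrow> cube_walk m q (cube_walk m q w u v i) u v i = w"
  by (rule nth_equality_blocks[of _ m q]) (simp add: nth_cube_walk; argo)+

lemma cube_walk_step:
  assumes "differ_only_at q u v j" "i < m"
  shows "differ_only_at (m * q) (cube_walk m q A u v i) (cube_walk m q A u v (Suc i)) (j * m + i)"
  unfolding differ_only_at_def
proof (intro conjI allI impI)
  have j: "j < q" "u ! j \<noteq> v ! j" "\<And>t. t < q \<Longrightarrow> t \<noteq> j \<Longrightarrow> u ! t = v ! t"
    using assms(1) by (auto simp: differ_only_at_def)
  show "j * m + i < m * q" using block_index_less[OF j(1) assms(2)] .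
  show "cube_walk m q A u v i ! (j * m + i) \<noteq> cube_walk m q A u v (Suc i) ! (j * m + i)"
    using j assms(2) by (simp add: nth_cube_walk)
  fix n assume "n < m * q" "n \<noteq> j * m + i"
  then obtain t s where ts: "t < q" "s < m" "n = t * m + s" and "t = j \<Longrightarrow> s \<noteq> i"
    using block_indexE by metis
  then have "(if s < i then v ! t else u ! t) = (if s < Suc i then v ! t else u ! t)"
    using j(3) by (cases "t = j") auto
  then show "cube_walk m q A u v i ! n = cube_walk m q A u v (Suc i) ! n"
    using ts by (simp add: nth_cube_walk)
qed

lemma block_odd_cube_walk:
  assumes "odd m" "t < q" "u ! t = v ! t"
  shows "block_odd m (cube_walk m q A u v i) t = (block_odd m A t \<noteq> u ! t)"
  unfolding block_odd_def
  by (rule odd_card_xor_const[OF assms(1)]) (simp add: nth_cube_walk assms)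

text \<open>Reading block \<open>t\<close> at its first and last position recovers \<open>v ! t\<close> and \<open>u ! t\<close>, since
  \<open>0 < i < m\<close> unless \<open>u = v\<close>.\<close>

lemma cube_walk_eq_cube_walkD:
  assumes lengths: "length u = q" "length v = q" "length u' = q" "length v' = q"
    and "0 < m" "i < m" "i' < m" "u = v \<longleftrightarrow> i = 0" "u' = v' \<longleftrightarrow> i' = 0"
    and eq: "cube_walk m q A u v i = cube_walk m q A u' v' i'"
  shows "u = u' \<and> v = v' \<and> i = i'"
proof -
  have bits: "(if s < i then v ! t else u ! t) = (if s < i' then v' ! t else u' ! t)"
    if "t < q" "s < m" for t s
    using arg_cong[OF eq, of "\<lambda>w. w ! (t * m + s)"] by (simp only: nth_cube_walk that) blast
  have "\<not> m - 1 < i" "\<not> m - 1 < i'" using assms(6,7) by auto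
  then have "u ! t = u' ! t" if "t < q" for t
    using bits[OF that, of "m - 1"] assms(5) by simp
  then have u: "u = u'" using lengths by (auto intro: nth_equalityI)
  have "v ! t = v' ! t" if "t < q" for t
    using bits[OF that, of 0] assms(5,8,9) by (cases "i = 0"; cases "i' = 0") simp_all
  then have v: "v = v'" using lengths by (auto intro: nth_equalityI)
  have "i = i'"
  proof (cases "u = v")
    case False
    then obtain t where "t < q" "u ! t \<noteq> v ! t" using lengths(1,2) by (auto simp: list_eq_iff_nth_eq)
    then have "\<not> i < i'" "\<not> i' < i"
      using bits[of t i] bits[of t i'] u v assms(6,7) by auto
    then show ?thesis by simp
  qed (use assms(8,9) u v in auto)
  with u v show ?thesis by simp
qed

definition cube_embed :: "nat \<Rightarrow> nat \<Rightarrow> bool list \<Rightarrow> bool list + (bool list set \<times> nat) \<Rightarrow> bool list" where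
  "cube_embed m q A x = (case x of
      Inl u \<Rightarrow> cube_walk m q A u u 0
    | Inr (e, i) \<Rightarrow> cube_walk m q A (fst (edge_ends e)) (snd (edge_ends e)) i)"

lemma length_cube_embed [simp]: "length (cube_embed m q A x) = m * q"
  by (simp add: cube_embed_def split: sum.split prod.split)

lemma cube_embed_stretch_pt:
  assumes "e \<in> edges (hypercube q)" "i \<le> m" "0 < m"
  shows "cube_embed m q A (stretch_pt m e i) = cube_walk m q A (fst (edge_ends e)) (snd (edge_ends e)) i"
  using assms(2,3) cube_walk_end[OF assms(3)]
  by (auto simp: stretch_pt_def cube_embed_def cube_walk_def)

lemma stretch_hypercube_vertE:
  assumes "x \<in> verts (stretch m (hypercube q))" "0 < m"
  obtains u v i where "length u = q" "length v = q" "i < m" "u = v \<longleftrightarrow> i = 0"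
    "x = (if u = v then Inl u else Inr ({u, v}, i))"
    "cube_embed m q A x = cube_walk m q A u v i"
  using assms(1) unfolding verts_stretch verts_hypercube
proof (elim UnE imageE CollectE exE conjE)
  fix u :: "bool list" assume "length u = q" "x = Inl u"
  then show thesis using that[of u u 0] assms(2) by (simp add: cube_embed_def)
next
  fix e i assume "x = Inr (e, i)" "e \<in> edges (hypercube q)" "0 < i" "i < m"
  moreover obtain u v j where "edge_ends e = (u, v)" "e = {u, v}" "length u = q" "length v = q"
    "differ_only_at q u v j"
    using hypercube_edgeE[OF \<open>e \<in> edges (hypercube q)\<close>] .
  moreover have "u \<noteq> v" using \<open>differ_only_at q u v j\<close> by (auto simp: differ_only_at_def)
  ultimately show thesis using that[of u v i] by (simp add: cube_embed_def)
qed

lemma inj_on_cube_embed: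
  assumes "0 < m"
  shows "inj_on (cube_embed m q A) (verts (stretch m (hypercube q)))"
proof (rule inj_onI)
  fix x y
  assume "x \<in> verts (stretch m (hypercube q))" "y \<in> verts (stretch m (hypercube q))"
    and eq: "cube_embed m q A x = cube_embed m q A y"
  obtain u v i where x: "length u = q" "length v = q" "i < m" "u = v \<longleftrightarrow> i = 0"
      "x = (if u = v then Inl u else Inr ({u, v}, i))" "cube_embed m q A x = cube_walk m q A u v i"
    using stretch_hypercube_vertE[OF \<open>x \<in> _\<close> assms] by metis
  obtain u' v' i' where y: "length u' = q" "length v' = q" "i' < m" "u' = v' \<longleftrightarrow> i' = 0"
      "y = (if u' = v' then Inl u' else Inr ({u', v'}, i'))" "cube_embed m q A y = cube_walk m q A u' v' i'"
    using stretch_hypercube_vertE[OF \<open>y \<in> _\<close> assms] by metis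
  have "u = u' \<and> v = v' \<and> i = i'"
    using cube_walk_eq_cube_walkD[OF x(1,2) y(1,2) assms x(3) y(3) x(4) y(4)] eq x(6) y(6) by simp
  then show "x = y" using x(5) y(5) by simp
qed

definition cube_copy :: "nat \<Rightarrow> nat \<Rightarrow> bool list \<Rightarrow> bool list graph" where
  "cube_copy m q A = image_graph (cube_embed m q A) (stretch m (hypercube q))"

lemma stretch_hypercube_edges_subset_verts:
  "e \<in> edges (stretch m (hypercube q)) \<Longrightarrow> e \<subseteq> verts (stretch m (hypercube q))"
  by (rule stretch_edges_subset_verts) (auto simp: edges_hypercube_iff verts_hypercube)

lemma isomorphic_cube_copy:
  "0 < m \<Longrightarrow> isomorphic (stretch m (hypercube q)) (cube_copy m q A)"
  unfolding cube_copy_def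
  by (intro isomorphic_image_graph inj_on_cube_embed stretch_hypercube_edges_subset_verts)

lemma edges_cube_copy:
  assumes "0 < m"
  shows "edges (cube_copy m q A) =
    {{cube_walk m q A (fst (edge_ends e)) (snd (edge_ends e)) i,
      cube_walk m q A (fst (edge_ends e)) (snd (edge_ends e)) (Suc i)} | e i.
     e \<in> edges (hypercube q) \<and> i < m}"
proof -
  have "cube_embed m q A ` {stretch_pt m e i, stretch_pt m e (Suc i)} =
      {cube_walk m q A (fst (edge_ends e)) (snd (edge_ends e)) i,
       cube_walk m q A (fst (edge_ends e)) (snd (edge_ends e)) (Suc i)}"
    if "e \<in> edges (hypercube q)" "i < m" for e i
    using cube_embed_stretch_pt[OF that(1) _ assms] that(2) by simp
  then show ?thesis
    unfolding cube_copy_def edges_image_graph edges_stretch by blast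
qed

lemma edges_cube_copyE:
  assumes "g \<in> edges (cube_copy m q A)" "0 < m"
  obtains u v j i where "edge_ends {u, v} = (u, v)" "length u = q" "length v = q"
    "differ_only_at q u v j" "i < m" "g = {cube_walk m q A u v i, cube_walk m q A u v (Suc i)}"
proof -
  obtain e i where "e \<in> edges (hypercube q)" "i < m"
    "g = {cube_walk m q A (fst (edge_ends e)) (snd (edge_ends e)) i,
          cube_walk m q A (fst (edge_ends e)) (snd (edge_ends e)) (Suc i)}"
    using assms by (auto simp: edges_cube_copy)
  moreover obtain u v j where "edge_ends e = (u, v)" "e = {u, v}" "length u = q" "length v = q"
    "differ_only_at q u v j"
    using hypercube_edgeE[OF \<open>e \<in> _\<close>] .
  ultimately show ?thesis using that[of u v j i] by simp
qed

lemma cube_copy_edgeI: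
  assumes "e \<in> edges (hypercube q)" "edge_ends e = (u, v)" "i < m" "0 < m"
  shows "{cube_walk m q A u v i, cube_walk m q A u v (Suc i)} \<in> edges (cube_copy m q A)"
  unfolding edges_cube_copy[OF assms(4)]
  by (intro CollectI exI[of _ e] exI[of _ i]) (simp add: assms(1-3))

lemma cube_copy_subgraph:
  assumes "0 < m"
  shows "subgraph (cube_copy m q A) (hypercube (m * q))"
  unfolding cube_copy_def
proof (rule subgraph_image_graph)
  show "cube_embed m q A ` verts (stretch m (hypercube q)) \<subseteq> verts (hypercube (m * q))"
    by (auto simp: verts_hypercube)
  fix e assume "e \<in> edges (stretch m (hypercube q))"
  then have "cube_embed m q A ` e \<in> edges (cube_copy m q A)"
    by (auto simp: cube_copy_def edges_image_graph)
  then obtain u v j i where "differ_only_at q u v j" "i < m"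
    "cube_embed m q A ` e = {cube_walk m q A u v i, cube_walk m q A u v (Suc i)}"
    using edges_cube_copyE[OF _ assms] by metis
  then show "cube_embed m q A ` e \<in> edges (hypercube (m * q))"
    using hypercube_edgeI[OF length_cube_walk length_cube_walk cube_walk_step] by simp
qed (rule stretch_hypercube_edges_subset_verts)

lemma cube_copies_share_no_edge:
  assumes "odd m" "A \<in> even_blocks m q" "A' \<in> even_blocks m q"
    "g \<in> edges (cube_copy m q A)" "g \<in> edges (cube_copy m q A')"
  shows "A = A'"
proof -
  have m: "0 < m" using assms(1) by (rule odd_pos)
  obtain u v j i where ends: "edge_ends {u, v} = (u, v)"
    and uv: "length u = q" "length v = q" "differ_only_at q u v j" "i < m"
    and g: "g = {cube_walk m q A u v i, cube_walk m q A u v (Suc i)}"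
    using edges_cube_copyE[OF assms(4) m] by metis
  obtain u' v' j' i' where ends': "edge_ends {u', v'} = (u', v')"
    and uv': "length u' = q" "length v' = q" "differ_only_at q u' v' j'" "i' < m"
    and g': "g = {cube_walk m q A' u' v' i', cube_walk m q A' u' v' (Suc i')}"
    using edges_cube_copyE[OF assms(5) m] by metis
  define P P' R R' where "P = cube_walk m q A u v i" "P' = cube_walk m q A u v (Suc i)"
    "R = cube_walk m q A' u' v' i'" "R' = cube_walk m q A' u' v' (Suc i')"
  have cases: "P = R \<and> P' = R' \<or> P = R' \<and> P' = R"
    using g g' by (auto simp: P_P'_R_R'_def doubleton_eq_iff)
  then have "differ_only_at (m * q) P P' (j' * m + i')"
    using cube_walk_step[OF uv'(3,4)] differ_only_at_sym by (auto simp: P_P'_R_R'_def)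
  moreover have "differ_only_at (m * q) P P' (j * m + i)"
    using cube_walk_step[OF uv(3,4)] by (simp add: P_P'_R_R'_def)
  ultimately have "j * m + i = j' * m + i'" by (rule differ_only_at_unique[rotated])
  then have j': "j' = j" and i': "i' = i" using uv(4) uv'(4) block_index_eq_iff by auto
  have off: "u ! t = u' ! t" if "t < q" "t \<noteq> j" for t
  proof -
    have "u ! t = v ! t" "u' ! t = v' ! t"
      using that uv(3) uv'(3) j' by (auto simp: differ_only_at_def)
    then have "block_odd m P t = u ! t" "block_odd m P' t = u ! t"
      "block_odd m R t = u' ! t" "block_odd m R' t = u' ! t"
      using assms(1-3) that(1) by (simp_all add: P_P'_R_R'_def block_odd_cube_walk even_blocks_def)
    with cases show ?thesis by auto
  qed
  have "{u, v} = {u', v'}"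
    by (rule doubleton_eq_of_differ_only_at[OF uv(1,2) uv'(1,2) uv(3) _ off]) (use uv'(3) j' in simp)
  then have "(u', v') = (u, v)" using ends ends' by metis
  then have u': "u' = u" and v': "v' = v" by simp_all
  have A_eq: "A ! (t * m + s) = A' ! (t * m + s) \<longleftrightarrow>
      (if s < i then v ! t else u ! t) = (if s < k then v ! t else u ! t)"
    if "t < q" "s < m" "cube_walk m q A u v i = cube_walk m q A' u v k" for t s k
    using arg_cong[OF that(3), of "\<lambda>w. w ! (t * m + s)"] by (simp only: nth_cube_walk that(1,2)) blast
  from cases show ?thesis
  proof
    assume "P = R \<and> P' = R'"
    then show ?thesis
      using A_eq[of _ _ i] assms(2,3) u' v' i'
      by (intro nth_equality_blocks[of _ m q]) (auto simp: P_P'_R_R'_def even_blocks_def)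
  next
    assume "P = R' \<and> P' = R"
    then have flip: "A ! (j * m + s) = A' ! (j * m + s) \<longleftrightarrow> s \<noteq> i" if "s < m" for s
      using A_eq[OF _ that, of j "Suc i"] uv(3) u' v' i' by (auto simp: P_P'_R_R'_def differ_only_at_def)
    have "block_odd m A j \<longleftrightarrow> \<not> block_odd m A' j"
      unfolding block_odd_def
      by (rule odd_card_change_one[OF uv(4)]) (use flip flip[OF uv(4)] in auto)
    then show ?thesis using assms(2,3) uv(3) by (auto simp: even_blocks_def differ_only_at_def)
  qed
qed

text \<open>The copy is translated through whichever endpoint of the edge \<open>{x, y}\<close> makes block \<open>j\<close>
  even; off block \<open>j\<close> evenness is forced by the choice of \<open>u\<close>.\<close>

lemma cube_walk_even_translate:
  assumes "odd m" "differ_only_at q u v j" "c < m"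
    and xy: "length x = m * q" "length y = m * q" "differ_only_at (m * q) x y (j * m + c)"
    and u: "\<And>t. t < q \<Longrightarrow> t \<noteq> j \<Longrightarrow> u ! t = block_odd m x t"
  shows "cube_walk m q (if block_odd m (cube_walk m q x u v c) j then y else x) u v c
           \<in> even_blocks m q"
  (is "cube_walk m q ?w u v c \<in> _")
proof -
  have j: "j < q" "\<And>t. t < q \<Longrightarrow> t \<noteq> j \<Longrightarrow> u ! t = v ! t"
    using assms(2) by (auto simp: differ_only_at_def)
  have y: "y ! (t * m + s) = x ! (t * m + s) \<longleftrightarrow> t \<noteq> j \<or> s \<noteq> c" if "t < q" "s < m" for t s
    using xy(3) block_index_less[OF that] block_index_eq_iff[OF that(2) assms(3)]
    by (auto simp: differ_only_at_def)
  have "\<not> block_odd m (cube_walk m q ?w u v c) t" if "t < q" for t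
  proof (cases "t = j")
    case False
    have "block_odd m ?w t = block_odd m x t"
      by (rule block_odd_cong) (use y[OF that] False in auto)
    then show ?thesis using block_odd_cube_walk[OF assms(1) that j(2)[OF that False]] u[OF that False]
      by simp
  next
    case True
    show ?thesis
    proof (cases "block_odd m (cube_walk m q x u v c) j")
      case odd: True
      have "block_odd m (cube_walk m q y u v c) j \<longleftrightarrow> \<not> block_odd m (cube_walk m q x u v c) j"
        unfolding block_odd_def
        by (rule odd_card_change_one[OF assms(3)])
          (use y[OF j(1)] y[OF j(1) assms(3)] j(1) assms(3) in \<open>auto simp: nth_cube_walk\<close>)
      then show ?thesis using odd True by simp
    qed (use True in simp)
  qed
  then show ?thesis using xy by (simp add: even_blocks_def)
qed

lemma edge_in_cube_copy:
  assumes "odd m" "g \<in> edges (hypercube (m * q))"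
  shows "\<exists>A \<in> even_blocks m q. g \<in> edges (cube_copy m q A)"
proof -
  have m: "0 < m" using assms(1) by (rule odd_pos)
  obtain x y n where g: "g = {x, y}" "length x = m * q" "length y = m * q"
    and xy: "differ_only_at (m * q) x y n"
    using assms(2) by (auto simp: edges_hypercube_iff)
  obtain j c where jc: "j < q" "c < m" "n = j * m + c"
    using xy block_indexE by (metis differ_only_at_def)
  define u where "u = map (\<lambda>t. t \<noteq> j \<and> block_odd m x t) [0..<q]"
  have "length u = q" by (simp add: u_def)
  moreover have u_j: "differ_only_at q u (u[j := True]) j"
    using jc(1) by (auto simp: u_def differ_only_at_def)
  ultimately have e: "{u, u[j := True]} \<in> edges (hypercube q)" by (simp add: hypercube_edgeI)
  then obtain u0 u1 j' where ends: "edge_ends {u, u[j := True]} = (u0, u1)"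
    and e01: "{u, u[j := True]} = {u0, u1}" "differ_only_at q u0 u1 j'"
    by (rule hypercube_edgeE)
  have d: "differ_only_at q u0 u1 j"
    using e01 u_j differ_only_at_sym by (auto simp: doubleton_eq_iff)
  have u0: "u0 ! t = block_odd m x t" if "t < q" "t \<noteq> j" for t
    using e01(1) that by (auto simp: doubleton_eq_iff u_def)
  define w where "w = (if block_odd m (cube_walk m q x u0 u1 c) j then y else x)"
  define A where "A = cube_walk m q w u0 u1 c"
  have walk_c: "cube_walk m q A u0 u1 c = w"
    using g(2,3) by (simp add: A_def w_def cube_walk_involution)
  then have "differ_only_at (m * q) w (cube_walk m q A u0 u1 (Suc c)) n"
    using cube_walk_step[OF d jc(2), of A] jc(3) by simp
  moreover have "differ_only_at (m * q) w (if w = x then y else x) n"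
    using xy differ_only_at_sym by (simp add: w_def)
  ultimately have "cube_walk m q A u0 u1 (Suc c) = (if w = x then y else x)"
    using differ_only_at_determines g(2,3) by simp
  then have "g = {cube_walk m q A u0 u1 c, cube_walk m q A u0 u1 (Suc c)}"
    using walk_c g(1) by (auto simp: w_def)
  also have "\<dots> \<in> edges (cube_copy m q A)" by (rule cube_copy_edgeI[OF e ends jc(2) m])
  finally have "g \<in> edges (cube_copy m q A)" .
  moreover have "A \<in> even_blocks m q"
    unfolding A_def w_def using cube_walk_even_translate[OF assms(1) d jc(2) g(2,3)] xy jc(3) u0 by simp
  ultimately show ?thesis by blast
qed

theorem proposition1:
  fixes m q :: nat
  assumes "odd m" and "m > 0" and "q \<ge> 1"
  shows "graph_divides (stretch m (hypercube q)) (hypercube (m * q))"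
  unfolding graph_divides_def
proof (intro exI[of _ "cube_copy m q ` even_blocks m q"] conjI ballI impI)
  fix H assume "H \<in> cube_copy m q ` even_blocks m q"
  then show "subgraph H (hypercube (m * q))" "isomorphic (stretch m (hypercube q)) H"
    using cube_copy_subgraph[OF assms(2)] isomorphic_cube_copy[OF assms(2)] by auto
next
  fix H H'
  assume "H \<in> cube_copy m q ` even_blocks m q" "H' \<in> cube_copy m q ` even_blocks m q" "H \<noteq> H'"
  then show "edges H \<inter> edges H' = {}" using cube_copies_share_no_edge[OF assms(1)] by blast
next
  show "\<Union> (edges ` cube_copy m q ` even_blocks m q) = edges (hypercube (m * q))"
    using cube_copy_subgraph[OF assms(2)] edge_in_cube_copy[OF assms(1)]
    by (auto simp: subgraph_def)
qed

end
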